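(* Let $p$ be an odd prime and let $x$ be an indeterminate. Then $$\sum_{k=0}^{p-1}\frac{\binom{2k}k^2}{16^k}\big(x^k-(-1)^{\frac{p-1}2}(1-x)^k\big)\equiv\sum_{k=0}^{\frac{p-1}2}\frac{\binom{2k}k^2}{16^k}\big(x^k-(-1)^{\frac{p-1}2}(1-x)^k\big)\equiv 0\pmod{p^2}.$$
   Context: The polynomials involved have rational coefficients whose denominators are prime to $p$; a congruence between such polynomials modulo $p^2$ means that every coefficient of their difference is a rational number whose numerator (in lowest terms) is divisible by $p^2$. *)

theory Defs
  imports "HOL-Computational_Algebra.Polynomial" "HOL-Computational_Algebra.Primes"
begin

definition rat_poly_cong :: "rat poly \<Rightarrow> rat poly \<Rightarrow> int \<Rightarrow> bool" where
  "rat_poly_cong f g m \<longleftrightarrow> (\<forall>i. m dvd fst (quotient_of (coeff (f - g) i)))"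

definition S_poly :: "nat \<Rightarrow> nat \<Rightarrow> rat poly" where
  "S_poly p n = (\<Sum>k=0..n. smult (of_nat ((2*k) choose k) ^ 2 / 16 ^ k)
      ([:0, 1:] ^ k - smult ((-1) ^ ((p - 1) div 2)) ([:1, -1:] ^ k)))"

end

theory Submission
  imports Defs "HOL-Number_Theory.Cong"
begin

text \<open>
  Write $p = 2n+1$. For $k \le n$ the numbers $\binom{2k}{k}^2$ and
  $16^k (-1)^k \binom{n}{k}\binom{n+k}{k}$ satisfy recurrences whose ratios $4(2k+1)^2/(k+1)^2$ and
  $(4(2k+1)^2 - 4p^2)/(k+1)^2$ agree modulo $p^2$, so the two numbers are congruent modulo $p^2$.
  The numbers $(-1)^k \binom{n}{k}\binom{n+k}{k}$ are the coefficients of the shifted Legendre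
  polynomial $Q_n(x) = P_n(1-2x)$, and $Q_n(1-x) = (-1)^n Q_n(x)$ says precisely that the sum with
  these coefficients vanishes identically. Finally, for $n < k < p$ the prime $p$ divides
  $\binom{2k}{k}$, so the terms with $k > n$ are divisible by $p^2$.
\<close>

declare binomial_Suc_Suc [simp del]

lemma Suc_times_central_binomial:
  "Suc k * (2 * Suc k choose Suc k) = 2 * (2 * k + 1) * (2 * k choose k)"
proof -
  have sym: "Suc (2 * k) choose k = Suc (2 * k) choose Suc k"
    using binomial_symmetric[of k "Suc (2 * k)"] by simp
  have "Suc k * (Suc k * (2 * Suc k choose Suc k)) = Suc k * (Suc (Suc (2 * k)) * (Suc (2 * k) choose k))"
    using Suc_times_binomial[of k "Suc (2 * k)"] by simp
  also have "\<dots> = Suc (Suc (2 * k)) * (Suc k * (Suc (2 * k) choose Suc k))"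
    by (simp only: sym mult.left_commute)
  also have "\<dots> = Suc k * (2 * (2 * k + 1) * (2 * k choose k))"
    by (simp only: Suc_times_binomial) simp
  finally show ?thesis by (metis mult_left_cancel nat.distinct(1))
qed

lemma Suc_times_binomial_Suc_right: "Suc k * (n choose Suc k) = (n - k) * (n choose k)"
proof (cases n)
  case (Suc m)
  then show ?thesis
    using Suc_times_binomial[of k m] binomial_absorb_comp[of n k] by simp
qed simp

lemma central_binomial_sq_Suc:
  "int (Suc k) ^ 2 * int (2 * Suc k choose Suc k) ^ 2 = 4 * (2 * int k + 1) ^ 2 * int (2 * k choose k) ^ 2"
proof -
  have "int (Suc k) * int (2 * Suc k choose Suc k) = 2 * (2 * int k + 1) * int (2 * k choose k)"
    using arg_cong[OF Suc_times_central_binomial[of k], of int] by (simp add: algebra_simps)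
  then have "(int (Suc k) * int (2 * Suc k choose Suc k)) ^ 2 = (2 * (2 * int k + 1) * int (2 * k choose k)) ^ 2"
    by (rule arg_cong)
  then show ?thesis
    by (simp only: power_mult_distrib) simp
qed

lemma binomial_product_Suc:
  "int (Suc k) ^ 2 * (16 ^ Suc k * (-1) ^ Suc k * int (n choose Suc k) * int (n + Suc k choose Suc k))
   = (4 * (2 * int k + 1) ^ 2 - 4 * (2 * int n + 1) ^ 2)
     * (16 ^ k * (-1) ^ k * int (n choose k) * int (n + k choose k))"
proof -
  have "int (Suc k) * int (n choose Suc k) = int ((n - k) * (n choose k))"
    by (simp only: of_nat_mult[symmetric] Suc_times_binomial_Suc_right)
  also have "\<dots> = (int n - int k) * int (n choose k)"
    by (cases "k \<le> n") (simp_all add: binomial_eq_0)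
  finally have choose_n: "int (Suc k) * int (n choose Suc k) = (int n - int k) * int (n choose k)" .
  have "int (Suc k) * int (n + Suc k choose Suc k) = int (Suc (n + k) * (n + k choose k))"
    by (simp only: of_nat_mult[symmetric] add_Suc_right Suc_times_binomial)
  also have "\<dots> = (int n + int k + 1) * int (n + k choose k)"
    by (simp add: algebra_simps)
  finally have choose_nk:
    "int (Suc k) * int (n + Suc k choose Suc k) = (int n + int k + 1) * int (n + k choose k)" .
  have "int (Suc k) ^ 2 * (16 ^ Suc k * (-1) ^ Suc k * int (n choose Suc k) * int (n + Suc k choose Suc k))
      = 16 ^ Suc k * (-1) ^ Suc k
        * (int (Suc k) * int (n choose Suc k)) * (int (Suc k) * int (n + Suc k choose Suc k))"
    by (simp add: power2_eq_square algebra_simps)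
  also have "\<dots> = (4 * (2 * int k + 1) ^ 2 - 4 * (2 * int n + 1) ^ 2)
      * (16 ^ k * (-1) ^ k * int (n choose k) * int (n + k choose k))"
    unfolding choose_n choose_nk by (simp add: power2_eq_square algebra_simps)
  finally show ?thesis .
qed

lemma central_binomial_sq_cong:
  fixes n k :: nat
  assumes "coprime (fact k) (2 * n + 1)"
  shows "[int (2 * k choose k) ^ 2 = 16 ^ k * (-1) ^ k * int (n choose k) * int (n + k choose k)]
           (mod (2 * int n + 1) ^ 2)"
  using assms
proof (induction k)
  case (Suc k)
  define m where "m = 2 * int n + 1"
  define A where "A = int (2 * k choose k) ^ 2"
  define B where "B = 16 ^ k * (-1) ^ k * int (n choose k) * int (n + k choose k)"
  define A' where "A' = int (2 * Suc k choose Suc k) ^ 2"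
  define B' where "B' = 16 ^ Suc k * (-1) ^ Suc k * int (n choose Suc k) * int (n + Suc k choose Suc k)"
  from Suc.prems have "coprime (Suc k * fact k) (2 * n + 1)"
    by (simp only: fact_Suc of_nat_id)
  then have cop: "coprime (fact k) (2 * n + 1)" "coprime (Suc k) (2 * n + 1)"
    by (simp_all only: coprime_mult_left_iff)
  have "int (Suc k) ^ 2 * A' = 4 * (2 * int k + 1) ^ 2 * A - 0"
    unfolding A_def A'_def by (simp only: central_binomial_sq_Suc diff_zero)
  also have "[\<dots> = 4 * (2 * int k + 1) ^ 2 * B - 4 * B * m ^ 2] (mod m ^ 2)"
    using cong_scalar_left[OF Suc.IH[OF cop(1)]] cong_sym[OF cong_mult_self_right]
    unfolding A_def B_def m_def by (rule cong_diff)
  also have "4 * (2 * int k + 1) ^ 2 * B - 4 * B * m ^ 2 = int (Suc k) ^ 2 * B'"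
    unfolding B_def B'_def m_def binomial_product_Suc by (simp add: algebra_simps)
  finally have "[int (Suc k) ^ 2 * A' = int (Suc k) ^ 2 * B'] (mod m ^ 2)" .
  moreover have "coprime (int (Suc k) ^ 2) (m ^ 2)"
  proof -
    have "coprime (int (Suc k)) (int (2 * n + 1))"
      using cop(2) by (simp only: coprime_int_iff)
    then show ?thesis
      by (simp add: m_def add.commute)
  qed
  ultimately have "[A' = B'] (mod m ^ 2)"
    by (simp only: cong_mult_lcancel)
  then show ?case
    by (simp only: A'_def B'_def m_def)
qed simp

definition rat_dvd :: "int \<Rightarrow> rat \<Rightarrow> bool" where
  "rat_dvd m r \<longleftrightarrow> (\<exists>a b. b \<noteq> 0 \<and> coprime b m \<and> m dvd a \<and> r = of_int a / of_int b)"

lemma rat_dvd_fraction: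
  "m dvd a \<Longrightarrow> coprime b m \<Longrightarrow> b \<noteq> 0 \<Longrightarrow> rat_dvd m (of_int a / of_int b)"
  unfolding rat_dvd_def by blast

lemma rat_dvd_0: "rat_dvd m 0"
  using rat_dvd_fraction[of m 0 1] by simp

lemma rat_dvd_add:
  assumes "rat_dvd m r" and "rat_dvd m s"
  shows "rat_dvd m (r + s)"
proof -
  obtain a b a' b' where "b \<noteq> 0" "coprime b m" "m dvd a" "r = of_int a / of_int b"
    and "b' \<noteq> 0" "coprime b' m" "m dvd a'" "s = of_int a' / of_int b'"
    using assms unfolding rat_dvd_def by blast
  then have "r + s = of_int (a * b' + a' * b) / of_int (b * b')"
    by (simp add: field_simps)
  moreover have "m dvd a * b' + a' * b" and "coprime (b * b') m"
    using \<open>m dvd a\<close> \<open>m dvd a'\<close> \<open>coprime b m\<close> \<open>coprime b' m\<close> by simp_all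
  ultimately show ?thesis
    using \<open>b \<noteq> 0\<close> \<open>b' \<noteq> 0\<close> by (metis rat_dvd_fraction mult_eq_0_iff)
qed

lemma rat_dvd_sum: "(\<And>k. k \<in> A \<Longrightarrow> rat_dvd m (f k)) \<Longrightarrow> rat_dvd m (sum f A)"
  by (induction A rule: infinite_finite_induct) (simp_all add: rat_dvd_0 rat_dvd_add)

lemma rat_dvd_mult_Ints:
  assumes "rat_dvd m r" and "z \<in> \<int>"
  shows "rat_dvd m (r * z)"
proof -
  obtain a b c where "b \<noteq> 0" "coprime b m" "m dvd a" "r = of_int a / of_int b" "z = of_int c"
    using assms unfolding rat_dvd_def by (auto elim: Ints_cases)
  then show ?thesis
    using rat_dvd_fraction[of m "a * c" b] by simp
qed

lemma rat_dvd_imp_dvd_numerator: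
  assumes "rat_dvd m r"
  shows "m dvd fst (quotient_of r)"
proof -
  obtain a b where "b \<noteq> 0" "coprime b m" "m dvd a" "r = of_int a / of_int b"
    using assms unfolding rat_dvd_def by blast
  moreover obtain a' b' where q: "quotient_of r = (a', b')"
    by (cases "quotient_of r")
  moreover have "b' > 0" "r = of_int a' / of_int b'"
    using q by (simp_all add: quotient_of_denom_pos quotient_of_div)
  ultimately have "a * b' = a' * b"
    by (simp add: frac_eq_eq flip: of_int_mult of_int_eq_iff)
  then have "m dvd a' * b"
    using \<open>m dvd a\<close> by (metis dvd_mult2)
  with \<open>coprime b m\<close> q show ?thesis
    by (simp add: coprime_commute coprime_dvd_mult_left_iff)
qed

lemma rat_poly_congI:
  assumes "f - g = (\<Sum>k\<in>A. smult (a k) (q k))"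
    and "\<And>k. k \<in> A \<Longrightarrow> rat_dvd m (a k)"
    and "\<And>k i. coeff (q k) i \<in> \<int>"
  shows "rat_poly_cong f g m"
  unfolding rat_poly_cong_def
proof
  fix i
  have "rat_dvd m (\<Sum>k\<in>A. a k * coeff (q k) i)"
    using assms(2,3) by (intro rat_dvd_sum rat_dvd_mult_Ints)
  then show "m dvd fst (quotient_of (coeff (f - g) i))"
    unfolding assms(1) coeff_sum coeff_smult by (rule rat_dvd_imp_dvd_numerator)
qed

lemma coeff_one_minus_X_power:
  "coeff ([:1, -1:] ^ n :: 'a::comm_ring_1 poly) k = (-1) ^ k * of_nat (n choose k)"
proof (induction n arbitrary: k)
  case 0
  show ?case by (cases k) simp_all
next
  case (Suc n)
  then show ?case
    by (cases k) (simp_all add: binomial_Suc_Suc algebra_simps)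
qed

lemma coeff_X_power_minus_smult_one_minus_X_power_Ints:
  "coeff ([:0, 1:] ^ k - smult c ([:1, -1:] ^ k)) i \<in> (\<int> :: 'a::comm_ring_1 set)" if "c \<in> \<int>"
proof -
  have "[:0, 1:] ^ k = (monom 1 k :: 'a poly)"
    by (simp add: monom_altdef)
  with that show ?thesis
    by (simp add: coeff_one_minus_X_power)
qed

lemma pcompose_power_left: "pcompose (p ^ n) q = pcompose p q ^ n"
  by (induction n) (simp_all add: pcompose_mult pcompose_1)

lemma higher_pderiv_pcompose_linear:
  fixes p :: "'a::idom poly"
  shows "(pderiv ^^ m) (pcompose p [:a, b:]) = smult (b ^ m) (pcompose ((pderiv ^^ m) p) [:a, b:])"
proof (induction m)
  case (Suc m)
  have "pderiv [:a, b:] = [:b:]"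
    by (simp add: pderiv_pCons)
  with Suc.IH show ?case
    by (simp add: pderiv_smult pderiv_pcompose mult.commute)
qed simp

lemma sum_coeff_smult_reflection:
  fixes p :: "'a::comm_ring_1 poly"
  assumes "degree p \<le> N"
  shows "(\<Sum>k\<le>N. smult (coeff p k) ([:0, 1:] ^ k - smult c ([:1, -1:] ^ k)))
         = p - smult c (pcompose p [:1, -1:])"
proof -
  have p: "p = (\<Sum>k\<le>N. smult (coeff p k) ([:0, 1:] ^ k))"
    using poly_as_sum_of_monoms'[OF assms] by (simp add: monom_altdef)
  have "pcompose p [:1, -1:] = (\<Sum>k\<le>N. smult (coeff p k) ([:1, -1:] ^ k))"
    by (subst p) (simp add: pcompose_sum pcompose_smult pcompose_power_left pcompose_pCons)
  moreover have "smult c (\<Sum>k\<le>N. f k) = (\<Sum>k\<le>N. smult c (f k))" for f :: "nat \<Rightarrow> 'a poly"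
    by (induction N) (simp_all add: smult_add_right)
  ultimately have "smult c (pcompose p [:1, -1:]) = (\<Sum>k\<le>N. smult (coeff p k) (smult c ([:1, -1:] ^ k)))"
    by (simp add: mult.commute)
  with p show ?thesis
    by (simp add: smult_diff_right sum_subtractf)
qed

text \<open>Rodrigues' formula: \<open>shifted_legendre n\<close> is $P_n(1 - 2x)$ for the Legendre polynomial $P_n$.\<close>

definition shifted_legendre :: "nat \<Rightarrow> 'a::field_char_0 poly" where
  "shifted_legendre n = smult (1 / fact n) ((pderiv ^^ n) ([:0, 1, -1:] ^ n))"

lemma degree_shifted_legendre: "degree (shifted_legendre n :: 'a::field_char_0 poly) \<le> n"
proof -
  have "degree ([:0, 1, -1:] ^ n :: 'a poly) \<le> 2 * n"
    using degree_power_le[of "[:0, 1, -1:] :: 'a poly" n] by simp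
  then show ?thesis
    unfolding shifted_legendre_def by (simp add: degree_higher_pderiv)
qed

lemma X_minus_X_sq_power: "[:0, 1, -1:] ^ n = monom 1 n * ([:1, -1:] ^ n :: 'a::comm_ring_1 poly)"
proof -
  have "[:0, 1, -1:] = [:0, 1:] * ([:1, -1:] :: 'a poly)"
    by simp
  then show ?thesis
    by (simp only: power_mult_distrib) (simp add: monom_altdef)
qed

lemma pochhammer_of_nat_Suc_div_fact:
  "pochhammer (of_nat (Suc k)) n / fact n = (of_nat (n + k choose k) :: 'a::field_char_0)"
proof -
  have "pochhammer (of_nat (Suc k)) n / fact n = (of_nat (k + n) gchoose n :: 'a)"
    by (simp add: gbinomial_pochhammer' add.commute)
  also have "\<dots> = of_nat (k + n choose n)"
    by (simp add: binomial_gbinomial)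
  also have "k + n choose n = n + k choose k"
    using binomial_symmetric[of k "n + k"] by (simp add: add.commute)
  finally show ?thesis .
qed

lemma coeff_shifted_legendre:
  "coeff (shifted_legendre n :: 'a::field_char_0 poly) k
   = (-1) ^ k * of_nat (n choose k) * of_nat (n + k choose k)"
  by (simp add: shifted_legendre_def coeff_higher_pderiv X_minus_X_sq_power coeff_monom_mult
      coeff_one_minus_X_power pochhammer_of_nat_Suc_div_fact[symmetric])

lemma shifted_legendre_reflect:
  "pcompose (shifted_legendre n) [:1, -1:] = smult ((-1) ^ n) (shifted_legendre n :: 'a::field_char_0 poly)"
proof -
  have "pcompose [:0, 1, -1:] [:1, -1:] = ([:0, 1, -1:] :: 'a poly)"
    by (simp add: pcompose_pCons)
  then have "pcompose ([:0, 1, -1:] ^ n) [:1, -1:] = ([:0, 1, -1:] :: 'a poly) ^ n"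
    by (simp add: pcompose_power_left)
  then have "(pderiv ^^ n) ([:0, 1, -1:] ^ n)
      = smult ((-1) ^ n) (pcompose ((pderiv ^^ n) ([:0, 1, -1:] ^ n)) [:1, -1 :: 'a:])"
    using higher_pderiv_pcompose_linear[of n "[:0, 1, -1:] ^ n" 1 "-1 :: 'a"] by simp
  from arg_cong[OF this, of "smult ((-1) ^ n)"]
  have "pcompose ((pderiv ^^ n) ([:0, 1, -1:] ^ n)) [:1, -1 :: 'a:]
      = smult ((-1) ^ n) ((pderiv ^^ n) ([:0, 1, -1:] ^ n))"
    by simp
  then show ?thesis
    by (simp add: shifted_legendre_def pcompose_smult)
qed

lemma shifted_legendre_reflection_sum:
  "(\<Sum>k\<le>n. smult (coeff (shifted_legendre n) k) ([:0, 1:] ^ k - smult ((-1) ^ n) ([:1, -1:] ^ k)))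
   = (0 :: 'a::field_char_0 poly)"
  by (simp add: sum_coeff_smult_reflection[OF degree_shifted_legendre] shifted_legendre_reflect
      flip: power_mult_distrib)

lemma prime_dvd_central_binomial:
  assumes "prime p" and "k < p" and "p \<le> 2 * k"
  shows "p dvd (2 * k choose k)"
proof -
  have "p dvd fact k * fact k * (2 * k choose k)"
    using binomial_fact_lemma[of k "2 * k"] assms by (simp add: prime_dvd_fact_iff)
  moreover have "\<not> p dvd fact k"
    using assms by (simp add: prime_dvd_fact_iff)
  ultimately show ?thesis
    using assms(1) by (simp add: prime_dvd_mult_iff)
qed

lemma rat_dvd_div_16_power:
  assumes "odd m" and "m dvd a"
  shows "rat_dvd m (of_int a / 16 ^ k)"
proof -
  have "coprime ((2 :: int) ^ (4 * k)) m"
    using assms(1) by simp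
  then have "coprime ((16 :: int) ^ k) m"
    by (simp add: power_mult)
  then show ?thesis
    using rat_dvd_fraction[OF assms(2), of "16 ^ k"] by simp
qed

lemma rat_dvd_central_binomial_sq:
  assumes "prime p" and "odd p" and "k < p" and "p \<le> 2 * k"
  shows "rat_dvd (int p ^ 2) (of_nat (2 * k choose k) ^ 2 / 16 ^ k)"
proof -
  have "int p ^ 2 dvd int (2 * k choose k) ^ 2"
    using prime_dvd_central_binomial[OF assms(1,3,4)] by (simp add: dvd_power_same)
  then show ?thesis
    using rat_dvd_div_16_power[of "int p ^ 2" "int (2 * k choose k) ^ 2" k] assms(2) by simp
qed

lemma rat_dvd_central_binomial_sq_minus_shifted_legendre:
  assumes "prime p" and "p = 2 * n + 1" and "k \<le> n"
  shows "rat_dvd (int p ^ 2) (of_nat (2 * k choose k) ^ 2 / 16 ^ k - coeff (shifted_legendre n) k)"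
proof -
  have "\<not> p dvd fact k"
    using assms by (simp add: prime_dvd_fact_iff)
  with assms(1,2) have "coprime (fact k) (2 * n + 1)"
    by (metis prime_imp_coprime coprime_commute)
  then have "[int (2 * k choose k) ^ 2 = 16 ^ k * (-1) ^ k * int (n choose k) * int (n + k choose k)]
      (mod (2 * int n + 1) ^ 2)"
    by (rule central_binomial_sq_cong)
  moreover have "2 * int n + 1 = int p"
    using assms(2) by simp
  ultimately have "int p ^ 2 dvd
      int (2 * k choose k) ^ 2 - 16 ^ k * (-1) ^ k * int (n choose k) * int (n + k choose k)"
    by (simp only: cong_iff_dvd_diff)
  moreover have "odd (int p ^ 2)"
    using assms(2) by simp
  moreover have "of_nat (2 * k choose k) ^ 2 / 16 ^ k - coeff (shifted_legendre n) k
      = of_int (int (2 * k choose k) ^ 2 - 16 ^ k * (-1) ^ k * int (n choose k) * int (n + k choose k))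
        / (16 ^ k :: rat)"
    by (simp add: coeff_shifted_legendre field_simps)
  ultimately show ?thesis
    by (metis rat_dvd_div_16_power)
qed

theorem theorem2p1:
  fixes p :: nat
  assumes "prime p" and "odd p"
  shows "rat_poly_cong (S_poly p (p - 1)) (S_poly p ((p - 1) div 2)) (int p ^ 2)
       \<and> rat_poly_cong (S_poly p ((p - 1) div 2)) 0 (int p ^ 2)"
proof -
  obtain n where p: "p = 2 * n + 1"
    using \<open>odd p\<close> oddE by blast
  then have half: "(p - 1) div 2 = n"
    by simp
  define T :: "nat \<Rightarrow> rat poly" where "T k = [:0, 1:] ^ k - smult ((-1) ^ n) ([:1, -1:] ^ k)" for k
  define c :: "nat \<Rightarrow> rat" where "c k = of_nat (2 * k choose k) ^ 2 / 16 ^ k" for k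
  have S: "S_poly p m = (\<Sum>k\<le>m. smult (c k) (T k))" for m
    unfolding S_poly_def T_def c_def half atLeast0AtMost ..
  have T_Ints: "coeff (T k) i \<in> \<int>" for k i
    unfolding T_def by (rule coeff_X_power_minus_smult_one_minus_X_power_Ints) simp
  have "rat_poly_cong (S_poly p (p - 1)) (S_poly p n) (int p ^ 2)"
  proof (rule rat_poly_congI[OF _ _ T_Ints])
    have "p - 1 = 2 * n"
      using p by simp
    moreover have "{..2 * n} = {..n} \<union> {n<..2 * n}" and "{..n} \<inter> {n<..2 * n} = {}"
      by auto
    ultimately show "S_poly p (p - 1) - S_poly p n = (\<Sum>k\<in>{n<..2 * n}. smult (c k) (T k))"
      by (simp add: S sum.union_disjoint)
    show "rat_dvd (int p ^ 2) (c k)" if "k \<in> {n<..2 * n}" for k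
      using rat_dvd_central_binomial_sq[OF assms] that p by (simp add: c_def)
  qed
  moreover have "rat_poly_cong (S_poly p n) 0 (int p ^ 2)"
  proof (rule rat_poly_congI[OF _ _ T_Ints])
    show "S_poly p n - 0 = (\<Sum>k\<le>n. smult (c k - coeff (shifted_legendre n) k) (T k))"
      using shifted_legendre_reflection_sum[of n]
      by (simp add: S T_def smult_diff_left sum_subtractf)
    show "rat_dvd (int p ^ 2) (c k - coeff (shifted_legendre n) k)" if "k \<in> {..n}" for k
      using rat_dvd_central_binomial_sq_minus_shifted_legendre[OF assms(1) p] that by (simp add: c_def)
  qed
  ultimately show ?thesis
    by (simp only: half)
qed

end
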